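(* Let $\varepsilon\in(0,1]$, $L\in[0,\infty)$, $q\in(1,\infty)$, let $f\colon\mathbb R\to\mathbb R$ satisfy $|f(x)-f(y)|\le L|x-y|$ for all $x,y\in\mathbb R$, and let $a\in C(\mathbb R,\mathbb R)$ satisfy $a(x)=\ln(1+\exp(x))$ for all $x\in\mathbb R$. Then there exists $\mathbf G\in\mathbf N$ such that (i) $\mathcal R_a(\mathbf G)\in C(\mathbb R,\mathbb R)$; (ii) $\mathcal H(\mathbf G)=1$; (iii) $|(\mathcal R_a(\mathbf G))(x)-(\mathcal R_a(\mathbf G))(y)|\le L|x-y|$ for all $x,y\in\mathbb R$; (iv) $|(\mathcal R_a(\mathbf G))(x)-f(x)|\le2\varepsilon\max\{1,|x|^q\}$ for all $x\in\mathbb R$; (v) $\mathbb D_1(\mathbf G)\le2(\max\{1,2L\})^{q/(q-1)}\varepsilon^{-q/(q-1)}+1$; and (vi) $\mathcal P(\mathbf G)=3\mathbb D_1(\mathbf G)+1\le12(\max\{1,2L\})^{q/(q-1)}\varepsilon^{-q/(q-1)}$.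
   Context: Artificial neural networks (ANNs). Let $\mathbb N=\{1,2,\dots\}$ and $\mathbf N=\bigcup_{L\in\mathbb N}\bigcup_{l_0,\dots,l_L\in\mathbb N}\prod_{k=1}^L(\mathbb R^{l_k\times l_{k-1}}\times\mathbb R^{l_k})$. For $\Phi=((W_1,B_1),\dots,(W_L,B_L))$ in the $(l_0,\dots,l_L)$ component, $\mathcal P(\Phi)=\sum_{k=1}^Ll_k(l_{k-1}+1)$, $\mathcal H(\Phi)=L-1$, $\mathbb D_1(\Phi)=l_1$. For $a\in C(\mathbb R,\mathbb R)$ the realization $\mathcal R_a(\Phi)\colon\mathbb R^{l_0}\to\mathbb R^{l_L}$ is $(\mathcal R_a(\Phi))(x_0)=W_Lx_{L-1}+B_L$ with $x_k=\mathfrak M_{a,l_k}(W_kx_{k-1}+B_k)$, $k=1,\dots,L-1$, where $\mathfrak M_{a,m}$ applies $a$ componentwise. *)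

theory Defs
  imports "HOL-Analysis.Analysis"
begin

text \<open>A network is a list of layers (W_k, B_k);
  a weight matrix W_k in R^{l_k x l_{k-1}} is a list of l_k rows, each of length l_{k-1};
  a bias B_k in R^{l_k} is a list of length l_k.\<close>

type_synonym layer = "real list list \<times> real list"
type_synonym ann = "layer list"

definition in_dim :: "ann \<Rightarrow> nat" where
  "in_dim \<Phi> = length (hd (fst (hd \<Phi>)))"

definition dims :: "ann \<Rightarrow> nat list" where
  "dims \<Phi> = in_dim \<Phi> # map (\<lambda>l. length (snd l)) \<Phi>"

definition out_dim :: "ann \<Rightarrow> nat" where
  "out_dim \<Phi> = last (dims \<Phi>)"

definition valid_ann :: "ann \<Rightarrow> bool" where
  "valid_ann \<Phi> \<longleftrightarrow> \<Phi> \<noteq> [] \<and>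
     (\<forall>k < length \<Phi>. length (snd (\<Phi> ! k)) \<ge> 1 \<and>
        length (fst (\<Phi> ! k)) = length (snd (\<Phi> ! k)) \<and>
        (\<forall>row \<in> set (fst (\<Phi> ! k)). length row = dims \<Phi> ! k)) \<and>
     in_dim \<Phi> \<ge> 1"

definition params :: "ann \<Rightarrow> nat" where
  "params \<Phi> = (\<Sum>k<length \<Phi>. dims \<Phi> ! (k+1) * (dims \<Phi> ! k + 1))"

definition hidden :: "ann \<Rightarrow> nat" where
  "hidden \<Phi> = length \<Phi> - 1"

definition D1 :: "ann \<Rightarrow> nat" where
  "D1 \<Phi> = dims \<Phi> ! 1"

definition matvec :: "real list list \<Rightarrow> real list \<Rightarrow> real list" where
  "matvec W x = map (\<lambda>row. sum_list (map2 (*) row x)) W"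

definition affine :: "layer \<Rightarrow> real list \<Rightarrow> real list" where
  "affine l x = map2 (+) (matvec (fst l) x) (snd l)"

fun realize :: "(real \<Rightarrow> real) \<Rightarrow> ann \<Rightarrow> real list \<Rightarrow> real list" where
  "realize a [] x = x"
| "realize a [l] x = affine l x"
| "realize a (l # l' # ls) x = realize a (l' # ls) (map a (affine l x))"

definition realize1 :: "(real \<Rightarrow> real) \<Rightarrow> ann \<Rightarrow> real \<Rightarrow> real" where
  "realize1 a \<Phi> x = hd (realize a \<Phi> [x])"

end

theory Submission
  imports Defs
begin

(*
  On [-R, R] the function f is approximated by its piecewise linear interpolant on n equal
  cells, which is a sum of ReLU ramps max (x - node j) 0 - max (x - node (j+1)) 0 weighted by
  the slopes; the network replaces the ReLU by softplus (k t) / k, which lies within 1/k of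
  it. Softplus is nondecreasing, 1-Lipschitz and convex, and these three properties alone
  make the ramp sum L-Lipschitz (summation by parts). Outside [-R, R] the interpolant is
  constant, so the error is at most L |x| + eps/2, which eps |x|^q absorbs as soon as
  R = (L/eps)^(1/(q-1)); the interpolation error L R / n <= eps then dictates
  n ~ (L/eps)^(q/(q-1)) cells and 2n hidden neurons.
*)

definition shallow_net :: "(real \<times> real \<times> real) list \<Rightarrow> real \<Rightarrow> ann" where
  "shallow_net ns c =
     [(map (\<lambda>(w, b, v). [w]) ns, map (\<lambda>(w, b, v). b) ns), ([map (\<lambda>(w, b, v). v) ns], [c])]"

lemma shallow_net_architecture:
  assumes "ns \<noteq> []"
  shows "valid_ann (shallow_net ns c) \<and> in_dim (shallow_net ns c) = 1 \<and>
    out_dim (shallow_net ns c) = 1 \<and> hidden (shallow_net ns c) = 1 \<and>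
    D1 (shallow_net ns c) = length ns \<and> params (shallow_net ns c) = 3 * length ns + 1"
proof -
  have in_dim: "in_dim (shallow_net ns c) = 1"
    using assms by (cases ns) (auto simp: in_dim_def shallow_net_def split: prod.splits)
  then have "dims (shallow_net ns c) = [1, length ns, 1]"
    by (simp add: dims_def shallow_net_def)
  with assms in_dim show ?thesis
    by (auto simp: valid_ann_def out_dim_def hidden_def D1_def params_def shallow_net_def
        less_Suc_eq numeral_2_eq_2 Suc_le_eq split: prod.splits)
qed

lemma realize1_shallow_net:
  "realize1 a (shallow_net ns c) x = c + (\<Sum>(w, b, v)\<leftarrow>ns. v * a (w * x + b))"
  by (simp add: realize1_def shallow_net_def affine_def matvec_def zip_map_map zip_same_conv_map
      o_def split_def)

definition softplus :: "real \<Rightarrow> real" where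
  "softplus z = ln (1 + exp z)"

lemma one_plus_exp_pos: "0 < 1 + exp (z::real)"
  by (simp add: add_pos_pos)

lemma softplus_ge_relu: "max z 0 \<le> softplus z"
proof -
  have "exp z \<le> 1 + exp z"
    by simp
  then have "z \<le> softplus z"
    by (simp add: softplus_def ln_ge_iff one_plus_exp_pos)
  moreover have "0 \<le> softplus z"
    by (simp add: softplus_def)
  ultimately show ?thesis
    by simp
qed

lemma softplus_le_relu_plus_one: "softplus z \<le> max z 0 + 1"
proof -
  have e: "2 \<le> exp (1::real)"
    using exp_ge_add_one_self[of 1] by simp
  have "1 + exp z \<le> exp (max z 0 + 1)"
  proof (cases "0 \<le> z")
    case True
    then have "1 + exp z \<le> exp z * 2"
      by simp
    also have "\<dots> \<le> exp z * exp 1"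
      using e by simp
    finally show ?thesis
      using True by (simp add: exp_add)
  next
    case False
    then have "exp z \<le> 1" and "exp (max z 0 + 1) = exp 1"
      by simp_all
    with e show ?thesis
      by linarith
  qed
  then have "ln (1 + exp z) \<le> ln (exp (max z 0 + 1))"
    using one_plus_exp_pos[of z] by (subst ln_le_cancel_iff) auto
  then show ?thesis
    by (simp add: softplus_def)
qed

lemma softplus_increment:
  "softplus (u + d) - softplus u = ln ((1 + exp u * exp d) / (1 + exp u))"
  using one_plus_exp_pos[of "u + d"] one_plus_exp_pos[of u]
  by (simp add: softplus_def exp_add ln_div)

lemma softplus_increment_nonneg:
  assumes "0 \<le> d"
  shows "0 \<le> softplus (u + d) - softplus u"
  using assms one_plus_exp_pos[of u] by (simp add: softplus_increment)

lemma softplus_increment_le: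
  assumes "0 \<le> d"
  shows "softplus (u + d) - softplus u \<le> d"
proof -
  have "1 + exp u * exp d \<le> exp d * (1 + exp u)"
    using assms by (simp add: algebra_simps)
  then have "(1 + exp u * exp d) / (1 + exp u) \<le> exp d"
    using one_plus_exp_pos[of u] by (simp add: divide_simps)
  then have "ln ((1 + exp u * exp d) / (1 + exp u)) \<le> ln (exp d)"
    using one_plus_exp_pos[of u] by (subst ln_le_cancel_iff) (auto simp: add_pos_pos)
  then show ?thesis
    by (simp add: softplus_increment)
qed

lemma softplus_increment_mono:
  assumes "0 \<le> d" and "u \<le> v"
  shows "softplus (u + d) - softplus u \<le> softplus (v + d) - softplus v"
proof -
  have "0 \<le> (exp v - exp u) * (exp d - 1)"
    using assms by simp
  then have "(1 + exp u * exp d) * (1 + exp v) \<le> (1 + exp v * exp d) * (1 + exp u)"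
    by (simp add: algebra_simps)
  then have "(1 + exp u * exp d) / (1 + exp u) \<le> (1 + exp v * exp d) / (1 + exp v)"
    using one_plus_exp_pos[of u] one_plus_exp_pos[of v] by (simp add: divide_simps)
  then have "ln ((1 + exp u * exp d) / (1 + exp u)) \<le> ln ((1 + exp v * exp d) / (1 + exp v))"
    using one_plus_exp_pos[of u] one_plus_exp_pos[of v]
    by (subst ln_le_cancel_iff) (auto simp: add_pos_pos)
  then show ?thesis
    by (simp add: softplus_increment)
qed

definition scaled_softplus :: "real \<Rightarrow> real \<Rightarrow> real" where
  "scaled_softplus k t = softplus (k * t) / k"

lemma relu_le_scaled_softplus:
  assumes "0 < k"
  shows "max t 0 \<le> scaled_softplus k t"
proof -
  have "max (k * t) 0 = k * max t 0"
    using assms by (auto simp: max_def mult_le_0_iff)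
  with softplus_ge_relu[of "k * t"] assms show ?thesis
    by (simp add: scaled_softplus_def le_divide_eq mult.commute)
qed

lemma scaled_softplus_le_relu:
  assumes "0 < k"
  shows "scaled_softplus k t \<le> max t 0 + 1 / k"
proof -
  have "max (k * t) 0 = k * max t 0"
    using assms by (auto simp: max_def mult_le_0_iff)
  with softplus_le_relu_plus_one[of "k * t"] assms show ?thesis
    by (simp add: scaled_softplus_def divide_le_eq algebra_simps)
qed

lemma scaled_softplus_increment:
  "scaled_softplus k (u + d) - scaled_softplus k u = (softplus (k * u + k * d) - softplus (k * u)) / k"
  by (simp add: scaled_softplus_def diff_divide_distrib algebra_simps)

lemma scaled_softplus_increment_nonneg:
  "0 < k \<Longrightarrow> 0 \<le> d \<Longrightarrow> 0 \<le> scaled_softplus k (u + d) - scaled_softplus k u"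
  using softplus_increment_nonneg[of "k * d" "k * u"] by (simp add: scaled_softplus_increment)

lemma scaled_softplus_increment_le:
  "0 < k \<Longrightarrow> 0 \<le> d \<Longrightarrow> scaled_softplus k (u + d) - scaled_softplus k u \<le> d"
  using softplus_increment_le[of "k * d" "k * u"]
  by (simp add: scaled_softplus_increment divide_le_eq mult.commute)

lemma scaled_softplus_increment_mono:
  "0 < k \<Longrightarrow> 0 \<le> d \<Longrightarrow> u \<le> v \<Longrightarrow>
    scaled_softplus k (u + d) - scaled_softplus k u \<le> scaled_softplus k (v + d) - scaled_softplus k v"
  using softplus_increment_mono[of "k * d" "k * u" "k * v"]
  by (simp add: scaled_softplus_increment divide_right_mono)

lemma lipschitz_linear_interpolation_error:
  fixes h t fa fb fx L :: real
  assumes "0 < h" "0 \<le> t" "t \<le> h" "0 \<le> L"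
    and "\<bar>fa - fx\<bar> \<le> L * t" "\<bar>fb - fx\<bar> \<le> L * (h - t)"
  shows "\<bar>fa + (fb - fa) / h * t - fx\<bar> \<le> L * h / 2"
proof -
  define l where "l = t / h"
  have l: "0 \<le> l" "l \<le> 1"
    using assms by (auto simp: l_def divide_simps)
  have "fa + (fb - fa) / h * t - fx = (1 - l) * (fa - fx) + l * (fb - fx)"
    using assms(1) by (simp add: l_def field_simps)
  also have "\<bar>\<dots>\<bar> \<le> (1 - l) * \<bar>fa - fx\<bar> + l * \<bar>fb - fx\<bar>"
    using l by (metis abs_mult abs_of_nonneg abs_triangle_ineq diff_ge_0_iff_ge)
  also have "\<dots> \<le> (1 - l) * (L * t) + l * (L * (h - t))"
    using l assms by (intro add_mono mult_left_mono) auto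
  also have "\<dots> = L * (2 * t * (h - t) / h)"
    using assms(1) by (simp add: l_def field_simps)
  also have "\<dots> \<le> L * (h / 2)"
  proof -
    have "0 \<le> (h - 2 * t) * (h - 2 * t)"
      by simp
    then have "2 * t * (h - t) / h \<le> h / 2"
      using assms(1) by (simp add: divide_simps algebra_simps)
    then show ?thesis
      using assms(4) by (rule mult_left_mono)
  qed
  finally show ?thesis
    by simp
qed

text \<open>The piecewise linear interpolant of \<open>f\<close> on the uniform grid of \<open>n\<close> cells over
  \<open>[-R, R]\<close> is \<open>ramp_sum (\<lambda>t. max t 0)\<close>; the network realizes \<open>ramp_sum\<close> with a
  rescaled softplus in place of the ReLU.\<close>
locale lipschitz_grid =
  fixes f :: "real \<Rightarrow> real" and L R :: real and n :: nat
  assumes lipschitz: "\<And>x y. \<bar>f x - f y\<bar> \<le> L * \<bar>x - y\<bar>"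
    and L_nonneg: "0 \<le> L" and R_pos: "0 < R" and n_pos: "0 < n"
begin

definition mesh :: real where
  "mesh = 2 * R / n"

definition node :: "nat \<Rightarrow> real" where
  "node j = - R + real j * mesh"

definition slope :: "nat \<Rightarrow> real" where
  "slope j = (f (node (Suc j)) - f (node j)) / mesh"

definition ramp_sum :: "(real \<Rightarrow> real) \<Rightarrow> real \<Rightarrow> real" where
  "ramp_sum \<sigma> x = f (- R) + (\<Sum>j<n. slope j * (\<sigma> (x - node j) - \<sigma> (x - node (Suc j))))"

lemma mesh_pos: "0 < mesh"
  using R_pos n_pos by (simp add: mesh_def)

lemma node_0 [simp]: "node 0 = - R"
  by (simp add: node_def)

lemma node_n [simp]: "node n = R"
  using n_pos by (simp add: node_def mesh_def)

lemma node_Suc: "node (Suc j) = node j + mesh"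
  by (simp add: node_def algebra_simps)

lemma node_mono: "i \<le> j \<Longrightarrow> node i \<le> node j"
  using mesh_pos by (simp add: node_def mult_right_mono)

lemma abs_slope_le: "\<bar>slope j\<bar> \<le> L"
proof -
  have "\<bar>f (node (Suc j)) - f (node j)\<bar> \<le> L * mesh"
    using lipschitz[of "node (Suc j)" "node j"] mesh_pos by (simp add: node_Suc)
  then show ?thesis
    using mesh_pos by (simp add: slope_def divide_simps)
qed

lemma sum_slope_mesh: "(\<Sum>j<m. slope j * mesh) = f (node m) - f (- R)"
  using mesh_pos sum_lessThan_telescope[of "\<lambda>j. f (node j)" m] by (simp add: slope_def)

text \<open>Summation by parts: with \<open>d j = \<sigma> (x - node j) - \<sigma> (y - node j)\<close>, which decreases
  in \<open>j\<close> from at most \<open>x - y\<close> to at least \<open>0\<close>, the difference \<open>ramp_sum \<sigma> x - ramp_sum \<sigma> y\<close>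
  is \<open>\<Sum>j<n. slope j * (d j - d (Suc j))\<close>.\<close>
lemma ramp_sum_lipschitz:
  assumes mono: "\<And>u d. 0 \<le> d \<Longrightarrow> 0 \<le> \<sigma> (u + d) - \<sigma> u"
    and increment_le: "\<And>u d. 0 \<le> d \<Longrightarrow> \<sigma> (u + d) - \<sigma> u \<le> d"
    and increment_mono: "\<And>u v d. 0 \<le> d \<Longrightarrow> u \<le> v \<Longrightarrow> \<sigma> (u + d) - \<sigma> u \<le> \<sigma> (v + d) - \<sigma> v"
  shows "\<bar>ramp_sum \<sigma> x - ramp_sum \<sigma> y\<bar> \<le> L * \<bar>x - y\<bar>"
proof -
  have one_sided: "\<bar>ramp_sum \<sigma> x - ramp_sum \<sigma> y\<bar> \<le> L * (x - y)" if "y \<le> x" for x y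
  proof -
    define d where "d j = \<sigma> (x - node j) - \<sigma> (y - node j)" for j
    have shift: "x - node j = (y - node j) + (x - y)" for j
      by simp
    have d_bounds: "0 \<le> d j" "d j \<le> x - y" for j
      using mono[of "x - y" "y - node j"] increment_le[of "x - y" "y - node j"] that
      by (simp_all add: d_def)
    have d_decreasing: "d (Suc j) \<le> d j" for j
    proof -
      have "\<sigma> ((y - node (Suc j)) + (x - y)) - \<sigma> (y - node (Suc j))
          \<le> \<sigma> ((y - node j) + (x - y)) - \<sigma> (y - node j)"
        by (rule increment_mono) (use that mesh_pos in \<open>auto simp: node_Suc\<close>)
      then show ?thesis
        unfolding d_def shift[symmetric] .
    qed
    have "ramp_sum \<sigma> x - ramp_sum \<sigma> y = (\<Sum>j<n. slope j * (d j - d (Suc j)))"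
      by (simp add: ramp_sum_def d_def sum_subtractf[symmetric] algebra_simps)
    also have "\<bar>\<dots>\<bar> \<le> (\<Sum>j<n. \<bar>slope j\<bar> * (d j - d (Suc j)))"
      by (rule order_trans[OF sum_abs]) (simp add: abs_mult d_decreasing)
    also have "\<dots> \<le> (\<Sum>j<n. L * (d j - d (Suc j)))"
      using abs_slope_le d_decreasing by (intro sum_mono mult_right_mono) auto
    also have "\<dots> = L * (d 0 - d n)"
      by (simp add: sum_distrib_left[symmetric] sum_lessThan_telescope')
    also have "\<dots> \<le> L * (x - y)"
      using d_bounds[of 0] d_bounds[of n] L_nonneg by (simp add: mult_left_mono)
    finally show ?thesis .
  qed
  show ?thesis
    using one_sided[of y x] one_sided[of x y] by (cases "y \<le> x") (auto simp: abs_minus_commute)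
qed

lemma ramp_sum_approx:
  assumes "\<And>t. \<tau> t \<le> \<sigma> t" and "\<And>t. \<sigma> t \<le> \<tau> t + \<delta>"
  shows "\<bar>ramp_sum \<sigma> x - ramp_sum \<tau> x\<bar> \<le> n * L * \<delta>"
proof -
  define e where "e t = \<sigma> t - \<tau> t" for t
  have e_diff: "\<bar>e (x - node j) - e (x - node (Suc j))\<bar> \<le> \<delta>" for j
    using assms[of "x - node j"] assms[of "x - node (Suc j)"] by (simp add: e_def abs_le_iff)
  have "ramp_sum \<sigma> x - ramp_sum \<tau> x = (\<Sum>j<n. slope j * (e (x - node j) - e (x - node (Suc j))))"
    by (simp add: ramp_sum_def e_def sum_subtractf[symmetric] algebra_simps)
  also have "\<bar>\<dots>\<bar> \<le> (\<Sum>j<n. \<bar>slope j\<bar> * \<bar>e (x - node j) - e (x - node (Suc j))\<bar>)"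
    by (rule order_trans[OF sum_abs]) (simp add: abs_mult)
  also have "\<dots> \<le> (\<Sum>j<n. L * \<delta>)"
    using abs_slope_le e_diff L_nonneg by (intro sum_mono mult_mono) auto
  finally show ?thesis
    by simp
qed

lemma ramp_sum_relu_left:
  assumes "x \<le> - R"
  shows "ramp_sum (\<lambda>t. max t 0) x = f (- R)"
proof -
  have "max (x - node j) 0 = 0" for j
    using node_mono[of 0 j] assms by simp
  then show ?thesis
    by (simp add: ramp_sum_def)
qed

lemma ramp_sum_relu_right:
  assumes "R \<le> x"
  shows "ramp_sum (\<lambda>t. max t 0) x = f R"
proof -
  have "max (x - node j) 0 - max (x - node (Suc j)) 0 = mesh" if "j < n" for j
    using node_mono[of "Suc j" n] assms that mesh_pos by (simp add: node_Suc)
  then show ?thesis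
    using sum_slope_mesh[of n] by (simp add: ramp_sum_def)
qed

lemma ramp_sum_relu_cell:
  assumes "m < n" and "node m \<le> x" and "x \<le> node (Suc m)"
  shows "ramp_sum (\<lambda>t. max t 0) x = f (node m) + slope m * (x - node m)"
proof -
  define ramp where "ramp j = max (x - node j) 0 - max (x - node (Suc j)) 0" for j
  have "ramp j = mesh" if "j < m" for j
    using node_mono[of "Suc j" m] assms that mesh_pos by (simp add: ramp_def node_Suc)
  moreover have "ramp m = x - node m"
    using assms by (simp add: ramp_def)
  moreover have "ramp j = 0" if "m < j" for j
    using node_mono[of "Suc m" j] node_mono[of "Suc m" "Suc j"] assms that
    by (simp add: ramp_def)
  ultimately have "(\<Sum>j<n. slope j * ramp j) = (\<Sum>j<m. slope j * mesh) + slope m * (x - node m)"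
    using assms(1) by (subst sum.mono_neutral_right[of "{..<n}" "{..<Suc m}"]) auto
  then show ?thesis
    by (simp add: ramp_sum_def ramp_def[symmetric] sum_slope_mesh)
qed

lemma ramp_sum_relu_error_inside:
  assumes "\<bar>x\<bar> < R"
  shows "\<bar>ramp_sum (\<lambda>t. max t 0) x - f x\<bar> \<le> L * R / n"
proof -
  define m where "m = nat \<lfloor>(x + R) / mesh\<rfloor>"
  have "0 < (x + R) / mesh"
    using assms mesh_pos by simp
  then have m: "real m \<le> (x + R) / mesh" "(x + R) / mesh < real m + 1"
    unfolding m_def by linarith+
  then have cell: "node m \<le> x" "x < node (Suc m)"
    using mesh_pos by (simp_all add: node_def divide_simps algebra_simps)
  have "(x + R) / mesh < n"
    using assms mesh_pos n_pos by (simp add: mesh_def divide_simps)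
  with m have "m < n"
    by linarith
  then have "ramp_sum (\<lambda>t. max t 0) x - f x
      = f (node m) + (f (node (Suc m)) - f (node m)) / mesh * (x - node m) - f x"
    using cell by (simp add: ramp_sum_relu_cell slope_def)
  also have "\<bar>\<dots>\<bar> \<le> L * mesh / 2"
  proof (rule lipschitz_linear_interpolation_error)
    show "\<bar>f (node m) - f x\<bar> \<le> L * (x - node m)"
      using lipschitz[of "node m" x] cell by simp
    show "\<bar>f (node (Suc m)) - f x\<bar> \<le> L * (mesh - (x - node m))"
      using lipschitz[of "node (Suc m)" x] cell by (simp add: node_Suc algebra_simps)
  qed (use cell mesh_pos L_nonneg node_Suc in auto)
  also have "\<dots> = L * R / n"
    by (simp add: mesh_def)
  finally show ?thesis .
qed

lemma ramp_sum_relu_error_outside: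
  assumes "R \<le> \<bar>x\<bar>"
  shows "\<bar>ramp_sum (\<lambda>t. max t 0) x - f x\<bar> \<le> L * \<bar>x\<bar>"
proof (cases "x \<le> 0")
  case True
  then have "\<bar>ramp_sum (\<lambda>t. max t 0) x - f x\<bar> \<le> L * \<bar>- R - x\<bar>"
    using assms lipschitz[of "- R" x] by (simp add: ramp_sum_relu_left)
  also have "\<dots> \<le> L * \<bar>x\<bar>"
    using True assms R_pos L_nonneg by (intro mult_left_mono) auto
  finally show ?thesis .
next
  case False
  then have "\<bar>ramp_sum (\<lambda>t. max t 0) x - f x\<bar> \<le> L * \<bar>R - x\<bar>"
    using assms lipschitz[of R x] by (simp add: ramp_sum_relu_right)
  also have "\<dots> \<le> L * \<bar>x\<bar>"
    using False assms R_pos L_nonneg by (intro mult_left_mono) auto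
  finally show ?thesis .
qed

definition grid_net :: "real \<Rightarrow> ann" where
  "grid_net k = shallow_net
     (map (\<lambda>j. (k, - k * node j, slope j / k)) [0..<n] @
      map (\<lambda>j. (k, - k * node (Suc j), - slope j / k)) [0..<n]) (f (- R))"

lemma grid_net_architecture:
  "valid_ann (grid_net k) \<and> in_dim (grid_net k) = 1 \<and> out_dim (grid_net k) = 1 \<and>
    hidden (grid_net k) = 1 \<and> D1 (grid_net k) = 2 * n \<and> params (grid_net k) = 3 * D1 (grid_net k) + 1"
  using shallow_net_architecture[of _ "f (- R)"] n_pos by (simp add: grid_net_def)

lemma realize1_grid_net: "realize1 softplus (grid_net k) x = ramp_sum (scaled_softplus k) x"
proof -
  have "slope j * softplus (k * x - k * y) / k = slope j * scaled_softplus k (x - y)" for j y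
    by (simp add: scaled_softplus_def right_diff_distrib)
  then show ?thesis
    by (simp add: grid_net_def realize1_shallow_net ramp_sum_def
        sum_set_upt_conv_sum_list_nat[symmetric] atLeast0LessThan sum_subtractf sum_negf
        right_diff_distrib)
qed

lemma grid_net_lipschitz:
  assumes "0 < k"
  shows "\<bar>realize1 softplus (grid_net k) x - realize1 softplus (grid_net k) y\<bar> \<le> L * \<bar>x - y\<bar>"
  unfolding realize1_grid_net
  by (rule ramp_sum_lipschitz) (use assms scaled_softplus_increment_nonneg
      scaled_softplus_increment_le scaled_softplus_increment_mono in auto)

lemma grid_net_error:
  assumes "0 < k"
  shows "\<bar>realize1 softplus (grid_net k) x - f x\<bar>
    \<le> \<bar>ramp_sum (\<lambda>t. max t 0) x - f x\<bar> + n * L / k"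
proof -
  have "\<bar>ramp_sum (scaled_softplus k) x - ramp_sum (\<lambda>t. max t 0) x\<bar> \<le> n * L * (1 / k)"
    by (rule ramp_sum_approx) (use relu_le_scaled_softplus scaled_softplus_le_relu assms in auto)
  then show ?thesis
    unfolding realize1_grid_net by (simp add: abs_le_iff) arith
qed

lemma grid_net_weighted_error:
  fixes \<epsilon> q :: real
  assumes "0 < \<epsilon>" and "1 \<le> R" and "0 \<le> q" and "L * R \<le> n * \<epsilon>"
    and growth: "\<And>x. R \<le> \<bar>x\<bar> \<Longrightarrow> L * \<bar>x\<bar> \<le> \<epsilon> * \<bar>x\<bar> powr q"
  shows "\<bar>realize1 softplus (grid_net (2 * (n * L + 1) / \<epsilon>)) x - f x\<bar> \<le> 2 * \<epsilon> * max 1 (\<bar>x\<bar> powr q)"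
proof -
  define k where "k = 2 * (n * L + 1) / \<epsilon>"
  have nL: "0 \<le> n * L"
    using L_nonneg by simp
  then have "0 < k"
    using assms(1) by (simp add: k_def)
  have "n * L / k \<le> \<epsilon> / 2"
    using assms(1) nL by (simp add: k_def divide_simps)
  with grid_net_error[OF \<open>0 < k\<close>, of x]
  have error: "\<bar>realize1 softplus (grid_net k) x - f x\<bar> \<le> \<bar>ramp_sum (\<lambda>t. max t 0) x - f x\<bar> + \<epsilon> / 2"
    by linarith
  show ?thesis
  proof (cases "\<bar>x\<bar> < R")
    case True
    have "L * R / n \<le> \<epsilon>"
      using assms(4) n_pos by (simp add: divide_simps mult.commute)
    with ramp_sum_relu_error_inside[OF True]
    have "\<bar>ramp_sum (\<lambda>t. max t 0) x - f x\<bar> \<le> \<epsilon>"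
      by linarith
    moreover have "2 * \<epsilon> \<le> 2 * \<epsilon> * max 1 (\<bar>x\<bar> powr q)"
      using assms(1) by simp
    ultimately show ?thesis
      using error assms(1) unfolding k_def by linarith
  next
    case False
    then have "1 \<le> \<bar>x\<bar> powr q"
      using assms(2,3) by (intro ge_one_powr_ge_zero) auto
    then have "\<epsilon> \<le> \<epsilon> * \<bar>x\<bar> powr q"
      using assms(1) by simp
    moreover have "2 * \<epsilon> * \<bar>x\<bar> powr q \<le> 2 * \<epsilon> * max 1 (\<bar>x\<bar> powr q)"
      using assms(1) by simp
    ultimately show ?thesis
      using error ramp_sum_relu_error_outside[of x] growth[of x] False
      unfolding k_def by linarith
  qed
qed

end

lemma one_le_width_bound:
  fixes \<epsilon> L q :: real
  assumes "0 < \<epsilon>" and "\<epsilon> \<le> 1" and "1 < q"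
  shows "1 \<le> max 1 (2 * L) powr (q / (q - 1)) * \<epsilon> powr (- q / (q - 1))"
proof -
  have "1 \<le> max 1 (2 * L) powr (q / (q - 1))"
    using assms(3) by (intro ge_one_powr_ge_zero) auto
  moreover have "1 \<le> \<epsilon> powr (- q / (q - 1))"
    using powr_mono'[of "- q / (q - 1)" 0 \<epsilon>] assms by (simp add: divide_nonpos_pos)
  ultimately show ?thesis
    by (metis mult_mono' mult_1_left zero_le_one)
qed

lemma linear_le_powr_beyond:
  fixes r q x :: real
  assumes "1 \<le> r" and "1 < q" and "r powr (1 / (q - 1)) \<le> \<bar>x\<bar>"
  shows "r * \<bar>x\<bar> \<le> \<bar>x\<bar> powr q"
proof -
  have "1 \<le> r powr (1 / (q - 1))"
    using assms(1,2) by (intro ge_one_powr_ge_zero) auto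
  then have x_pos: "0 < \<bar>x\<bar>"
    using assms(3) by linarith
  have "r = (r powr (1 / (q - 1))) powr (q - 1)"
    using assms(1,2) by (simp add: powr_powr)
  also have "\<dots> \<le> \<bar>x\<bar> powr (q - 1)"
    using assms by (intro powr_mono2) auto
  finally have "r * \<bar>x\<bar> \<le> \<bar>x\<bar> powr (q - 1) * \<bar>x\<bar>"
    using x_pos by simp
  also have "\<dots> = \<bar>x\<bar> powr q"
    using x_pos powr_add[of "\<bar>x\<bar>" "q - 1" 1] by simp
  finally show ?thesis .
qed

lemma grid_width_bound:
  fixes \<epsilon> L q :: real
  assumes "0 < \<epsilon>" and "\<epsilon> \<le> 1" and "0 \<le> L" and "1 < q"
  shows "real (2 * nat \<lceil>max 1 (L / \<epsilon>) powr (q / (q - 1))\<rceil>)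
    \<le> 2 * max 1 (2 * L) powr (q / (q - 1)) * \<epsilon> powr (- q / (q - 1)) + 1"
proof -
  define p where "p = q / (q - 1)"
  define T where "T = max 1 (2 * L) powr p * \<epsilon> powr (- p)"
  have p: "1 \<le> p"
    using assms(4) by (simp add: p_def divide_simps)
  have T: "1 \<le> T"
    using one_le_width_bound[OF assms(1,2,4), of L] by (simp add: T_def p_def)
  have "real (2 * nat \<lceil>max 1 (L / \<epsilon>) powr p\<rceil>) \<le> 2 * T + 1"
  proof (cases "L \<le> \<epsilon>")
    case True
    with assms(1) T show ?thesis
      by simp
  next
    case False
    define r where "r = L / \<epsilon>"
    have r: "1 < r" "max 1 (L / \<epsilon>) = r"
      using False assms(1) by (simp_all add: r_def)
    have "1 \<le> r powr p"
      using r p by (intro ge_one_powr_ge_zero) auto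
    have "(2 * L) powr p * \<epsilon> powr (- p) = 2 powr p * r powr p"
      using assms(1,3) by (simp add: r_def powr_mult powr_divide powr_minus divide_inverse inverse_powr)
    also have "\<dots> \<ge> 2 * r powr p"
      using p powr_mono[of 1 p 2] by (intro mult_right_mono) auto
    moreover have "(2 * L) powr p * \<epsilon> powr (- p) \<le> T"
      unfolding T_def using assms(3) p by (intro mult_right_mono powr_mono2) auto
    ultimately have "2 * r powr p \<le> T"
      by linarith
    with \<open>1 \<le> r powr p\<close> T r show ?thesis
      by simp linarith
  qed
  then show ?thesis
    by (simp add: T_def p_def)
qed

lemma grid_parameters:
  fixes \<epsilon> L q :: real
  assumes "0 < \<epsilon>" and "\<epsilon> \<le> 1" and "0 \<le> L" and "1 < q"
  obtains R n where "1 \<le> R" and "0 < n" and "L * R \<le> real n * \<epsilon>"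
    and "\<And>x. R \<le> \<bar>x\<bar> \<Longrightarrow> L * \<bar>x\<bar> \<le> \<epsilon> * \<bar>x\<bar> powr q"
    and "real (2 * n) \<le> 2 * max 1 (2 * L) powr (q / (q - 1)) * \<epsilon> powr (- q / (q - 1)) + 1"
proof -
  define r where "r = max 1 (L / \<epsilon>)"
  define R where "R = r powr (1 / (q - 1))"
  define n where "n = nat \<lceil>r powr (q / (q - 1))\<rceil>"
  have r: "1 \<le> r" "L \<le> \<epsilon> * r"
    using assms(1) by (auto simp: r_def max_def field_simps)
  have R: "1 \<le> R"
    unfolding R_def using r assms(4) by (intro ge_one_powr_ge_zero) auto
  have "r powr (q / (q - 1)) \<le> real n"
    unfolding n_def by linarith
  moreover have "1 \<le> r powr (q / (q - 1))"
    using r assms(4) by (intro ge_one_powr_ge_zero) auto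
  ultimately have n: "r powr (q / (q - 1)) \<le> real n" "0 < n"
    by auto
  have "r * R = r powr (1 + 1 / (q - 1))"
    unfolding R_def using r by (simp add: powr_add)
  also have "1 + 1 / (q - 1) = q / (q - 1)"
    using assms(4) by (simp add: field_simps)
  finally have rR: "r * R = r powr (q / (q - 1))" .
  have "L * R \<le> \<epsilon> * (r * R)"
    using mult_right_mono[OF r(2), of R] R by (simp add: mult.assoc)
  also have "\<dots> \<le> \<epsilon> * real n"
    using rR n assms(1) by simp
  finally have "L * R \<le> real n * \<epsilon>"
    by (simp add: mult.commute)
  moreover have "L * \<bar>x\<bar> \<le> \<epsilon> * \<bar>x\<bar> powr q" if "R \<le> \<bar>x\<bar>" for x
  proof -
    have "L * \<bar>x\<bar> \<le> \<epsilon> * (r * \<bar>x\<bar>)"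
      using mult_right_mono[OF r(2), of "\<bar>x\<bar>"] by simp
    also have "\<dots> \<le> \<epsilon> * \<bar>x\<bar> powr q"
      using linear_le_powr_beyond[OF r(1) assms(4)] that assms(1) by (simp add: R_def)
    finally show ?thesis .
  qed
  moreover have "real (2 * n) \<le> 2 * max 1 (2 * L) powr (q / (q - 1)) * \<epsilon> powr (- q / (q - 1)) + 1"
    using grid_width_bound[OF assms] by (simp add: n_def r_def)
  ultimately show ?thesis
    using that R n by blast
qed

theorem mainTheorem18:
  fixes \<epsilon> L q :: real and f a :: "real \<Rightarrow> real"
  assumes "0 < \<epsilon>" and "\<epsilon> \<le> 1" and "0 \<le> L" and "1 < q"
    and "\<forall>x y. \<bar>f x - f y\<bar> \<le> L * \<bar>x - y\<bar>"
    and "continuous_on UNIV a"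
    and "\<forall>x. a x = ln (1 + exp x)"
  shows "\<exists>G. valid_ann G \<and> in_dim G = 1 \<and> out_dim G = 1 \<and>
     continuous_on UNIV (realize1 a G) \<and>
     hidden G = 1 \<and>
     (\<forall>x y. \<bar>realize1 a G x - realize1 a G y\<bar> \<le> L * \<bar>x - y\<bar>) \<and>
     (\<forall>x. \<bar>realize1 a G x - f x\<bar> \<le> 2 * \<epsilon> * max 1 (\<bar>x\<bar> powr q)) \<and>
     real (D1 G) \<le> 2 * (max 1 (2 * L)) powr (q / (q - 1)) * \<epsilon> powr (- q / (q - 1)) + 1 \<and>
     params G = 3 * D1 G + 1 \<and>
     real (params G) \<le> 12 * (max 1 (2 * L)) powr (q / (q - 1)) * \<epsilon> powr (- q / (q - 1))"
proof -
  obtain R n where R: "1 \<le> R" and n: "0 < n" and "L * R \<le> real n * \<epsilon>"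
    and growth: "\<And>x. R \<le> \<bar>x\<bar> \<Longrightarrow> L * \<bar>x\<bar> \<le> \<epsilon> * \<bar>x\<bar> powr q"
    and width: "real (2 * n) \<le> 2 * max 1 (2 * L) powr (q / (q - 1)) * \<epsilon> powr (- q / (q - 1)) + 1"
    using grid_parameters[OF assms(1-4)] by blast
  interpret lipschitz_grid f L R n
    using assms(3,5) R n by unfold_locales auto
  define k where "k = 2 * (n * L + 1) / \<epsilon>"
  have "0 < k"
    using assms(1,3) by (simp add: k_def add_nonneg_pos)
  have "a = softplus"
    using assms(7) by (auto simp: softplus_def)
  moreover have "\<bar>realize1 softplus (grid_net k) x - realize1 softplus (grid_net k) y\<bar> \<le> L * \<bar>x - y\<bar>" for x y
    using grid_net_lipschitz[OF \<open>0 < k\<close>] .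
  moreover from this have "continuous_on UNIV (realize1 softplus (grid_net k))"
    by (intro lipschitz_on_continuous_on[of L] lipschitz_onI) (auto simp: dist_real_def assms(3))
  moreover have "\<bar>realize1 softplus (grid_net k) x - f x\<bar> \<le> 2 * \<epsilon> * max 1 (\<bar>x\<bar> powr q)" for x
    unfolding k_def by (rule grid_net_weighted_error) (use assms R growth \<open>L * R \<le> real n * \<epsilon>\<close> in auto)
  ultimately show ?thesis
    using grid_net_architecture[of k] width one_le_width_bound[OF assms(1,2,4), of L]
    by (intro exI[of _ "grid_net k"]) auto
qed

end
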